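(* Let $\pi$ be a positive continuous probability density on $\mathbb{R}$ and $q:\mathbb{R}^2\to[0,\infty)$ a bounded continuous function with $q(x,\cdot)$ a probability density for each $x$ and, for some $s>0$, $q(x,x+u)=0$ whenever $|u|>s$. Then for every $a>0$, $\|T_{a^c}\|_2\le\beta_a$, where $\beta_a:=\int_{-s}^{s}\sup_{|x|>a}\sqrt{t(x,x+u)\,t(x+u,x)}\,du$.
   Context: $L^2(\pi)$ is the $L^2$ space of the probability measure $\pi(y)dy$, with operator norm $\|\cdot\|_2$. Set $t(x,y):=\min(q(x,y),\pi(y)q(y,x)/\pi(x))$, $(Tf)(x):=\int_{\mathbb{R}}f(y)t(x,y)\,dy$, and $T_{a^c}f:=1_{\mathbb{R}\setminus[-a,a]}\cdot Tf$. *)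

theory Defs
  imports "HOL-Analysis.Analysis"
begin

definition tker :: "(real \<Rightarrow> real) \<Rightarrow> (real \<Rightarrow> real \<Rightarrow> real) \<Rightarrow> real \<Rightarrow> real \<Rightarrow> real" where
  "tker p q x y = min (q x y) (p y * q y x / p x)"

definition Top :: "(real \<Rightarrow> real) \<Rightarrow> (real \<Rightarrow> real \<Rightarrow> real) \<Rightarrow> (real \<Rightarrow> real) \<Rightarrow> real \<Rightarrow> real" where
  "Top p q f x = (LINT y|lborel. f y * tker p q x y)"

definition Tac :: "(real \<Rightarrow> real) \<Rightarrow> (real \<Rightarrow> real \<Rightarrow> real) \<Rightarrow> real \<Rightarrow> (real \<Rightarrow> real) \<Rightarrow> real \<Rightarrow> real" where
  "Tac p q a f x = indicator (UNIV - {-a..a}) x * Top p q f x"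

definition L2norm :: "(real \<Rightarrow> real) \<Rightarrow> (real \<Rightarrow> real) \<Rightarrow> ereal" where
  "L2norm p f = (if integrable lborel (\<lambda>y. (f y)\<^sup>2 * p y)
                 then ereal (sqrt (LINT y|lborel. (f y)\<^sup>2 * p y)) else \<infinity>)"

definition opnorm2 :: "(real \<Rightarrow> real) \<Rightarrow> ((real \<Rightarrow> real) \<Rightarrow> (real \<Rightarrow> real)) \<Rightarrow> ereal" where
  "opnorm2 p A = (SUP f \<in> {f. L2norm p f \<le> 1}. L2norm p (A f))"

end

theory Submission
  imports Defs
begin

(*
  Detailed balance p x * t x y = p y * t y x gives, for |x| > a,
  p x * t(x,y)^2 = p y * t(x,y) * t(y,x) <= p y * S(y - x)^2, where S is the integrand of beta_a,
  which vanishes outside [-s, s]. So the kernel t, weighted by p, is dominated by the translation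
  kernel S(y - x); Cauchy-Schwarz in y followed by Tonelli and translation invariance in x
  (a Schur test) bounds the weighted L^2 norm of T_{a^c} f by beta_a times that of |f|.
*)

lemma norm_integral_le_nn_integral_norm:
  fixes f :: "'a \<Rightarrow> 'b::{banach, second_countable_topology}"
  shows "ennreal (norm (integral\<^sup>L M f)) \<le> (\<integral>\<^sup>+x. norm (f x) \<partial>M)"
  by (cases "integrable M f") (simp_all add: integral_norm_bound_ennreal not_integrable_integral_eq)

(*
  L2norm only forces |f| to be measurable, not f; since the Bochner integral of a non-integrable
  function is 0, x \<mapsto> LINT y. f y * K x y is nevertheless measurable for continuous K: it vanishes
  wherever K x does not vanish somewhere on the closed set of points near which f is not measurable.
*)
definition nonmeasurable_points :: "('a::metric_space \<Rightarrow> real) \<Rightarrow> 'a set" where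
  "nonmeasurable_points f =
     {y. \<forall>e>0. (\<lambda>z. f z * indicator (ball y e) z) \<notin> borel_measurable borel}"

lemma open_compl_nonmeasurable_points:
  "- nonmeasurable_points f =
     \<Union>{ball y e | y e. 0 < e \<and> (\<lambda>z. f z * indicator (ball y e) z) \<in> borel_measurable borel}"
  (is "_ = \<Union>?F")
proof
  show "\<Union>?F \<subseteq> - nonmeasurable_points f"
  proof
    fix z assume "z \<in> \<Union>?F"
    then obtain y e where "0 < e" and m: "(\<lambda>z. f z * indicator (ball y e) z) \<in> borel_measurable borel"
      and z: "z \<in> ball y e" by blast
    define e' where "e' = e - dist y z"
    have "0 < e'" using z by (simp add: e'_def)
    have "ball z e' \<subseteq> ball y e"
    proof
      fix w assume "w \<in> ball z e'"
      then show "w \<in> ball y e" using dist_triangle[of y w z] by (simp add: e'_def)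
    qed
    then have "(\<lambda>w. f w * indicator (ball z e') w) = (\<lambda>w. (f w * indicator (ball y e) w) * indicator (ball z e') w)"
      by (auto simp: indicator_def fun_eq_iff)
    also have "\<dots> \<in> borel_measurable borel"
      by (intro borel_measurable_times m borel_measurable_indicator) simp
    finally show "z \<in> - nonmeasurable_points f"
      using \<open>0 < e'\<close> by (auto simp: nonmeasurable_points_def)
  qed
  show "- nonmeasurable_points f \<subseteq> \<Union>?F"
  proof
    fix z assume "z \<in> - nonmeasurable_points f"
    then obtain e where e: "0 < e" "(\<lambda>w. f w * indicator (ball z e) w) \<in> borel_measurable borel"
      by (auto simp: nonmeasurable_points_def)
    show "z \<in> \<Union>?F"
    proof (rule UnionI)
      show "ball z e \<in> ?F" using e by blast
      show "z \<in> ball z e" using e by simp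
    qed
  qed
qed

lemma closed_nonmeasurable_points: "closed (nonmeasurable_points f)"
  unfolding closed_def open_compl_nonmeasurable_points
  by (intro open_Union ballI) (elim CollectE exE conjE, simp)

lemma borel_measurable_restrict_compl_nonmeasurable_points:
  fixes f :: "'a::{metric_space, second_countable_topology} \<Rightarrow> real"
  shows "(\<lambda>z. f z * indicator (- nonmeasurable_points f) z) \<in> borel_measurable borel"
proof -
  define D where "D = nonmeasurable_points f"
  define \<F> where "\<F> = {ball y e | y e. 0 < e \<and> (\<lambda>z. f z * indicator (ball y e) z) \<in> borel_measurable borel}"
  have "\<And>S. S \<in> \<F> \<Longrightarrow> open S"
    unfolding \<F>_def by (elim CollectE exE conjE) simp
  then obtain \<F>' where \<F>': "\<F>' \<subseteq> \<F>" "countable \<F>'" "\<Union>\<F>' = \<Union>\<F>"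
    by (rule Lindelof)
  have "\<Union>\<F> = - D"
    unfolding \<F>_def D_def by (rule open_compl_nonmeasurable_points[symmetric])
  have measurable_piece: "(\<lambda>z. f z * indicator U z) \<in> borel_measurable borel"
    and open_piece: "open U" if "U \<in> \<F>'" for U
    using that \<F>'(1) unfolding \<F>_def by blast+
  show ?thesis
    unfolding borel_measurable_iff_greater D_def[symmetric]
  proof
    fix c
    have "{w \<in> space borel. c < f w * indicator (- D) w} =
      (\<Union>U\<in>\<F>'. {w \<in> space borel. c < f w * indicator U w} \<inter> U) \<union> (if c < 0 then D else {})"
      using \<F>'(3) \<open>\<Union>\<F> = - D\<close> by (auto simp: indicator_def split: if_splits)
    also have "\<dots> \<in> sets borel"
    proof (intro sets.Un sets.countable_UN''[OF \<F>'(2)] sets.Int)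
      fix U assume "U \<in> \<F>'"
      then show "{w \<in> space borel. c < f w * indicator U w} \<in> sets borel" "U \<in> sets borel"
        using measurable_piece open_piece unfolding borel_measurable_iff_greater by auto
    next
      show "(if c < 0 then D else {}) \<in> sets borel"
        using closed_nonmeasurable_points[of f] by (simp add: D_def)
    qed
    finally show "{w \<in> space borel. c < f w * indicator (- D) w} \<in> sets borel" .
  qed
qed

lemma not_integrable_mult_continuous_nonmeasurable_point:
  fixes f k :: "'a::euclidean_space \<Rightarrow> real"
  assumes k: "continuous_on UNIV k" and "y0 \<in> nonmeasurable_points f" "k y0 \<noteq> 0"
  shows "\<not> integrable lborel (\<lambda>y. f y * k y)"
proof
  assume "integrable lborel (\<lambda>y. f y * k y)"
  then have fk: "(\<lambda>y. f y * k y) \<in> borel_measurable borel" by auto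
  have "open {y. k y \<noteq> 0}"
    by (intro open_Collect_neq k continuous_on_const)
  then obtain e where "0 < e" and e: "ball y0 e \<subseteq> {y. k y \<noteq> 0}"
    using \<open>k y0 \<noteq> 0\<close> by (elim openE) auto
  have "(\<lambda>y. f y * indicator (ball y0 e) y) = (\<lambda>y. f y * k y / k y * indicator (ball y0 e) y)"
    using e by (auto simp: fun_eq_iff indicator_def)
  also have "\<dots> \<in> borel_measurable borel"
    using borel_measurable_continuous_onI[OF k]
    by (intro borel_measurable_times[OF borel_measurable_divide[OF fk]] borel_measurable_indicator) simp_all
  finally show False
    using assms(2) \<open>0 < e\<close> by (auto simp: nonmeasurable_points_def)
qed

lemma borel_measurable_integral_continuous_kernel:
  fixes K :: "'a::second_countable_topology \<Rightarrow> 'b::euclidean_space \<Rightarrow> real"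
    and f :: "'b \<Rightarrow> real"
  assumes K: "continuous_on UNIV (\<lambda>(x, y). K x y)"
  shows "(\<lambda>x. LINT y|lborel. f y * K x y) \<in> borel_measurable borel"
proof -
  define D where "D = nonmeasurable_points f"
  define G where "G = {x. \<forall>y\<in>D. K x y = 0}"
  have K_x: "continuous_on UNIV (K x)" for x
    using continuous_on_compose2[OF K, of UNIV "\<lambda>y. (x, y)"] by (simp add: continuous_on_Pair)
  have K_y: "continuous_on UNIV (\<lambda>x. K x y)" for y
    using continuous_on_compose2[OF K, of UNIV "\<lambda>x. (x, y)"] by (simp add: continuous_on_Pair)
  have [measurable]: "(\<lambda>y. f y * indicator (- D) y) \<in> borel_measurable borel"
    unfolding D_def by (rule borel_measurable_restrict_compl_nonmeasurable_points)
  have "closed G"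
    unfolding G_def Collect_ball_eq by (intro closed_INT ballI closed_Collect_eq K_y continuous_on_const)
  then have [measurable]: "G \<in> sets borel" by simp
  have [measurable]: "(\<lambda>(x, y). K x y) \<in> borel_measurable (borel \<Otimes>\<^sub>M lborel)"
  proof -
    have sets_eq: "sets (borel \<Otimes>\<^sub>M lborel) = sets (borel \<Otimes>\<^sub>M (borel :: 'b measure))"
      by (intro sets_pair_measure_cong) simp_all
    have "(\<lambda>(x, y). K x y) \<in> borel_measurable (borel \<Otimes>\<^sub>M borel)"
      using borel_measurable_continuous_onI[OF K] by (simp only: borel_prod)
    then show ?thesis
      unfolding measurable_cong_sets[OF sets_eq refl] .
  qed
  have "(LINT y|lborel. f y * K x y) = indicator G x * (LINT y|lborel. f y * indicator (- D) y * K x y)" for x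
  proof (cases "x \<in> G")
    case True
    then have "(\<lambda>y. f y * K x y) = (\<lambda>y. f y * indicator (- D) y * K x y)"
      by (auto simp: G_def fun_eq_iff indicator_def)
    then show ?thesis using True by simp
  next
    case False
    then obtain y0 where "y0 \<in> nonmeasurable_points f" "K x y0 \<noteq> 0" by (auto simp: G_def D_def)
    then have "\<not> integrable lborel (\<lambda>y. f y * K x y)"
      by (intro not_integrable_mult_continuous_nonmeasurable_point K_x)
    then show ?thesis using False by (simp add: not_integrable_integral_eq)
  qed
  moreover have "(\<lambda>x. indicator G x * (LINT y|lborel. f y * indicator (- D) y * K x y)) \<in> borel_measurable borel"
    by measurable
  ultimately show ?thesis by simp
qed

lemma nn_integral_Schur_test_translation:
  fixes K :: "real \<Rightarrow> real \<Rightarrow> real" and S w v g :: "real \<Rightarrow> real"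
  assumes [measurable]: "(\<lambda>(x, y). K x y) \<in> borel_measurable (lborel \<Otimes>\<^sub>M lborel)"
    "S \<in> borel_measurable borel" "w \<in> borel_measurable borel" "v \<in> borel_measurable borel"
    "g \<in> borel_measurable borel"
    and nonneg: "\<And>x y. 0 \<le> K x y" "\<And>u. 0 \<le> S u" "\<And>x. 0 \<le> w x" "\<And>y. 0 \<le> v y" "\<And>y. 0 \<le> g y"
    and dominated: "\<And>x y. w x * (K x y)\<^sup>2 \<le> v y * (S (y - x))\<^sup>2"
  shows "(\<integral>\<^sup>+x. ennreal (w x) * (\<integral>\<^sup>+y. ennreal (g y * K x y) \<partial>lborel)\<^sup>2 \<partial>lborel)
    \<le> (\<integral>\<^sup>+u. ennreal (S u) \<partial>lborel)\<^sup>2 * (\<integral>\<^sup>+y. ennreal ((g y)\<^sup>2 * v y) \<partial>lborel)"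
proof -
  define \<beta> where "\<beta> = (\<integral>\<^sup>+u. ennreal (S u) \<partial>lborel)"
  define h where "h y = ennreal ((g y)\<^sup>2 * v y)" for y
  have [measurable]: "h \<in> borel_measurable borel" unfolding h_def by measurable
  have shift: "(\<integral>\<^sup>+x. ennreal (S (y - x)) \<partial>lborel) = \<beta>" for y
    using nn_integral_real_affine[of "\<lambda>u. ennreal (S u)" "-1" y] by (simp add: \<beta>_def)
  have shift': "(\<integral>\<^sup>+y. ennreal (S (y - x)) \<partial>lborel) = \<beta>" for x
    using nn_integral_real_affine[of "\<lambda>u. ennreal (S u)" 1 "-x"] by (simp add: \<beta>_def)
  have pointwise: "ennreal (w x) * (\<integral>\<^sup>+y. ennreal (g y * K x y) \<partial>lborel)\<^sup>2
      \<le> \<beta> * (\<integral>\<^sup>+y. ennreal (S (y - x)) * h y \<partial>lborel)" for x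
  proof -
    define r where "r y = sqrt (S (y - x))" for y
    have [measurable]: "r \<in> borel_measurable borel" unfolding r_def by measurable
    have "sqrt (w x * (K x y)\<^sup>2) \<le> sqrt (v y * (S (y - x))\<^sup>2)" for y
      by (rule real_sqrt_le_mono[OF dominated])
    then have root: "sqrt (w x) * K x y \<le> r y * (r y * sqrt (v y))" for y
      using nonneg by (simp add: r_def real_sqrt_mult ac_simps)
    have "ennreal (w x) * (\<integral>\<^sup>+y. ennreal (g y * K x y) \<partial>lborel)\<^sup>2
        = (\<integral>\<^sup>+y. ennreal (sqrt (w x) * (g y * K x y)) \<partial>lborel)\<^sup>2"
      using nonneg by (simp add: ennreal_mult nn_integral_cmult power_mult_distrib ennreal_power)
    also have "\<dots> \<le> (\<integral>\<^sup>+y. ennreal (r y) * ennreal (r y * g y * sqrt (v y)) \<partial>lborel)\<^sup>2"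
    proof (intro power_mono nn_integral_mono)
      fix y
      have "sqrt (w x) * (g y * K x y) \<le> r y * (r y * g y * sqrt (v y))"
        using mult_left_mono[OF root nonneg(5)] by (simp add: ac_simps)
      then show "ennreal (sqrt (w x) * (g y * K x y)) \<le> ennreal (r y) * ennreal (r y * g y * sqrt (v y))"
        using nonneg by (simp add: ennreal_mult[symmetric] r_def ennreal_leI)
    qed simp
    also have "\<dots> \<le> (\<integral>\<^sup>+y. ennreal (r y) ^ 2 \<partial>lborel) * (\<integral>\<^sup>+y. ennreal (r y * g y * sqrt (v y)) ^ 2 \<partial>lborel)"
      by (rule Cauchy_Schwarz_nn_integral) measurable
    also have "\<dots> = \<beta> * (\<integral>\<^sup>+y. ennreal (S (y - x)) * h y \<partial>lborel)"
      using nonneg shift' by (simp add: r_def h_def ennreal_power power_mult_distrib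
          ennreal_mult[symmetric] ac_simps)
    finally show ?thesis .
  qed
  have "(\<integral>\<^sup>+x. ennreal (w x) * (\<integral>\<^sup>+y. ennreal (g y * K x y) \<partial>lborel)\<^sup>2 \<partial>lborel)
      \<le> (\<integral>\<^sup>+x. \<beta> * (\<integral>\<^sup>+y. ennreal (S (y - x)) * h y \<partial>lborel) \<partial>lborel)"
    by (intro nn_integral_mono pointwise)
  also have "\<dots> = \<beta> * (\<integral>\<^sup>+x. (\<integral>\<^sup>+y. ennreal (S (y - x)) * h y \<partial>lborel) \<partial>lborel)"
    by (rule nn_integral_cmult) measurable
  also have "(\<integral>\<^sup>+x. (\<integral>\<^sup>+y. ennreal (S (y - x)) * h y \<partial>lborel) \<partial>lborel)
      = (\<integral>\<^sup>+y. (\<integral>\<^sup>+x. ennreal (S (y - x)) \<partial>lborel) * h y \<partial>lborel)"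
    by (subst lborel_pair.Fubini') (simp_all add: nn_integral_multc)
  also have "\<dots> = \<beta> * (\<integral>\<^sup>+y. h y \<partial>lborel)"
    by (simp add: shift nn_integral_cmult)
  finally show ?thesis
    by (simp add: \<beta>_def h_def power2_eq_square mult.assoc)
qed

lemma borel_measurable_SUP_continuous:
  fixes h :: "'i \<Rightarrow> 'a::topological_space \<Rightarrow> real"
  assumes "A \<noteq> {}" "\<And>u. bdd_above ((\<lambda>i. h i u) ` A)" "\<And>i. i \<in> A \<Longrightarrow> continuous_on UNIV (h i)"
  shows "(\<lambda>u. SUP i\<in>A. h i u) \<in> borel_measurable borel"
  unfolding borel_measurable_iff_greater
proof
  fix c
  have "{u. c < (SUP i\<in>A. h i u)} = (\<Union>i\<in>A. {u. c < h i u})"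
    using less_cSUP_iff[OF assms(1,2)] by auto
  moreover have "open (\<Union>i\<in>A. {u. c < h i u})"
    using assms(3) by (intro open_UN ballI open_Collect_less continuous_on_const) auto
  ultimately show "{u \<in> space borel. c < (SUP i\<in>A. h i u)} \<in> sets borel" by simp
qed

lemma nn_integral_Icc_eq_interval_integral:
  fixes f :: "real \<Rightarrow> real"
  assumes [measurable]: "f \<in> borel_measurable borel"
    and "\<And>u. 0 \<le> f u" "\<And>u. f u \<le> B" "a \<le> b"
  shows "(\<integral>\<^sup>+u. ennreal (f u * indicator {a..b} u) \<partial>lborel) = ennreal (LBINT u=a..b. f u)"
proof -
  have "integrable lborel (\<lambda>u. B * indicator {a..b} u :: real)"
    using assms(4) by (intro integrable_mult_right integrable_real_indicator) auto
  then have "integrable lborel (\<lambda>u. f u * indicator {a..b} u)"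
    by (rule Bochner_Integration.integrable_bound)
      (auto simp: assms(2) indicator_def intro!: AE_I2 order_trans[OF assms(3) abs_ge_self])
  moreover have "(LBINT u=a..b. f u) = (LINT u|lborel. f u * indicator {a..b} u)"
    using assms(4) by (simp add: interval_integral_Icc set_lebesgue_integral_def ac_simps)
  ultimately show ?thesis
    using assms(2) by (simp add: nn_integral_eq_integral)
qed

lemma nn_integral_le_of_L2norm_le:
  assumes "L2norm p f \<le> ereal c" "\<And>y. 0 \<le> p y"
  shows "(\<integral>\<^sup>+y. ennreal ((f y)\<^sup>2 * p y) \<partial>lborel) \<le> ennreal (c\<^sup>2)"
proof -
  have int: "integrable lborel (\<lambda>y. (f y)\<^sup>2 * p y)"
    using assms(1) by (auto simp: L2norm_def split: if_splits)
  then have "sqrt (LINT y|lborel. (f y)\<^sup>2 * p y) \<le> c"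
    using assms(1) by (simp add: L2norm_def)
  then have "(LINT y|lborel. (f y)\<^sup>2 * p y) \<le> c\<^sup>2"
    by (rule sqrt_le_D)
  then show ?thesis
    using assms(2) by (subst nn_integral_eq_integral[OF int]) auto
qed

lemma borel_measurable_abs_of_L2norm_finite:
  assumes "L2norm p f \<noteq> \<infinity>" "\<And>y. 0 < p y" "p \<in> borel_measurable borel"
  shows "(\<lambda>y. \<bar>f y\<bar>) \<in> borel_measurable borel"
proof -
  have "integrable lborel (\<lambda>y. (f y)\<^sup>2 * p y)"
    using assms(1) by (auto simp: L2norm_def split: if_splits)
  then have "(\<lambda>y. (f y)\<^sup>2 * p y) \<in> borel_measurable borel" by auto
  then have "(\<lambda>y. sqrt ((f y)\<^sup>2 * p y / p y)) \<in> borel_measurable borel"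
    using assms(3) by measurable
  moreover have "sqrt ((f y)\<^sup>2 * p y / p y) = \<bar>f y\<bar>" for y
    using assms(2)[of y] by simp
  ultimately show ?thesis by simp
qed

lemma L2norm_le_of_nn_integral_le:
  assumes [measurable]: "h \<in> borel_measurable borel" "p \<in> borel_measurable borel"
    and "\<And>y. 0 \<le> p y" "0 \<le> c"
    and "(\<integral>\<^sup>+y. ennreal ((h y)\<^sup>2 * p y) \<partial>lborel) \<le> ennreal (c\<^sup>2)"
  shows "L2norm p h \<le> ereal c"
proof -
  have nonneg: "AE y in lborel. 0 \<le> (h y)\<^sup>2 * p y"
    using assms(3) by simp
  have "integrable lborel (\<lambda>y. (h y)\<^sup>2 * p y)"
    using assms(3,5) by (intro integrableI_nonneg nonneg) (auto simp: le_less_trans)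
  moreover have "(LINT y|lborel. (h y)\<^sup>2 * p y) \<le> c\<^sup>2"
    using assms(3,4,5) by (subst integral_eq_nn_integral) (auto intro: enn2real_leI)
  ultimately show ?thesis
    using assms(4) by (simp add: L2norm_def real_le_lsqrt)
qed

lemma interval_integral_Icc_nonneg:
  fixes f :: "real \<Rightarrow> real" and a b :: real
  assumes "a \<le> b" "\<And>u. 0 \<le> f u"
  shows "0 \<le> (LBINT u=a..b. f u)"
proof -
  have "0 \<le> (LINT u|lborel. f u * indicator {a..b} u)"
    using assms(2) by (intro integral_nonneg_AE) (auto simp: indicator_def)
  with assms(1) show ?thesis
    by (simp add: interval_integral_Icc set_lebesgue_integral_def ac_simps)
qed

locale metropolis_kernel =
  fixes p :: "real \<Rightarrow> real" and q :: "real \<Rightarrow> real \<Rightarrow> real"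
  assumes p_pos: "\<And>x. 0 < p x"
    and p_cont: "continuous_on UNIV p"
    and q_nonneg: "\<And>x y. 0 \<le> q x y"
    and q_bdd: "\<exists>B. \<forall>x y. q x y \<le> B"
    and q_cont: "continuous_on UNIV (\<lambda>(x, y). q x y)"
begin

abbreviation t :: "real \<Rightarrow> real \<Rightarrow> real" where
  "t \<equiv> tker p q"

lemma tker_nonneg: "0 \<le> t x y"
  using p_pos[of x] p_pos[of y] q_nonneg[of x y] q_nonneg[of y x] by (simp add: tker_def)

lemma tker_le: "t x y \<le> q x y"
  by (simp add: tker_def)

lemma tker_reversible: "p x * t x y = p y * t y x"
  using p_pos[of x] p_pos[of y]
  by (simp add: tker_def min_mult_distrib_left min.commute)

lemma continuous_on_tker: "continuous_on UNIV (\<lambda>(x, y). t x y)"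
proof -
  have q_comp: "continuous_on UNIV (\<lambda>z. q (f z) (g z))"
    if "continuous_on UNIV f" "continuous_on UNIV g" for f g :: "real \<times> real \<Rightarrow> real"
    using continuous_on_compose2[OF q_cont continuous_on_Pair[OF that]] by simp
  have p_comp: "continuous_on UNIV (\<lambda>z. p (f z))"
    if "continuous_on UNIV f" for f :: "real \<times> real \<Rightarrow> real"
    using continuous_on_compose2[OF p_cont that] by simp
  show ?thesis
    unfolding tker_def case_prod_beta
    by (intro continuous_intros q_comp p_comp) (auto simp: p_pos less_imp_neq[symmetric])
qed

lemma continuous_on_tker_comp:
  "continuous_on UNIV f \<Longrightarrow> continuous_on UNIV g \<Longrightarrow> continuous_on UNIV (\<lambda>z. t (f z) (g z))"
  using continuous_on_compose2[OF continuous_on_tker continuous_on_Pair] by fastforce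

lemma borel_measurable_tker [measurable]: "(\<lambda>(x, y). t x y) \<in> borel_measurable (lborel \<Otimes>\<^sub>M lborel)"
  using borel_measurable_continuous_onI[OF continuous_on_tker]
  by (simp add: borel_prod[symmetric])

definition tail_envelope :: "real \<Rightarrow> real \<Rightarrow> real" where
  "tail_envelope a u = (SUP x\<in>{x. a < \<bar>x\<bar>}. sqrt (t x (x + u) * t (x + u) x))"

lemma sqrt_tker_product_bounded: obtains B where "\<And>x u. sqrt (t x (x + u) * t (x + u) x) \<le> B"
proof -
  obtain B where "\<And>x y. q x y \<le> B" using q_bdd by blast
  then have B: "t x y \<le> B" for x y using tker_le[of x y] by (meson order_trans)
  then have "0 \<le> B" using tker_nonneg[of 0 0] B[of 0 0] by linarith
  have "sqrt (t x (x + u) * t (x + u) x) \<le> sqrt (B * B)" for x u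
    using B \<open>0 \<le> B\<close> by (intro real_sqrt_le_mono mult_mono tker_nonneg)
  then show ?thesis by (rule that)
qed

lemma tail_set_nonempty: "{x::real. a < \<bar>x\<bar>} \<noteq> {}"
  by (auto intro!: exI[of _ "\<bar>a\<bar> + 1"])

lemma bdd_above_tail_envelope: "bdd_above ((\<lambda>x. sqrt (t x (x + u) * t (x + u) x)) ` A)"
proof -
  obtain B where "\<And>x u. sqrt (t x (x + u) * t (x + u) x) \<le> B"
    using sqrt_tker_product_bounded by blast
  then show ?thesis by (intro bdd_aboveI2)
qed

lemma le_tail_envelope: "a < \<bar>x\<bar> \<Longrightarrow> sqrt (t x (x + u) * t (x + u) x) \<le> tail_envelope a u"
  unfolding tail_envelope_def by (rule cSUP_upper[OF _ bdd_above_tail_envelope]) simp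

lemma tail_envelope_nonneg: "0 \<le> tail_envelope a u"
  using tker_nonneg by (intro order_trans[OF _ le_tail_envelope[of a "\<bar>a\<bar> + 1"]]) auto

lemma tail_envelope_bounded: obtains B where "\<And>u. tail_envelope a u \<le> B"
proof -
  obtain B where "\<And>x u. sqrt (t x (x + u) * t (x + u) x) \<le> B"
    using sqrt_tker_product_bounded by blast
  then have "tail_envelope a u \<le> B" for u
    unfolding tail_envelope_def by (intro cSUP_least tail_set_nonempty)
  then show ?thesis by (rule that)
qed

lemma borel_measurable_tail_envelope [measurable]: "tail_envelope a \<in> borel_measurable borel"
  unfolding tail_envelope_def
  by (intro borel_measurable_SUP_continuous tail_set_nonempty bdd_above_tail_envelope
      continuous_on_real_sqrt continuous_on_mult continuous_on_tker_comp continuous_intros)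

lemma weighted_tker_square_le_tail_envelope:
  assumes "a < \<bar>x\<bar>"
  shows "p x * (t x y)\<^sup>2 \<le> p y * (tail_envelope a (y - x))\<^sup>2"
proof -
  have "p x * (t x y)\<^sup>2 = p y * (sqrt (t x (x + (y - x)) * t (x + (y - x)) x))\<^sup>2"
    using tker_nonneg[of x y] tker_nonneg[of y x]
    by (simp add: power2_eq_square tker_reversible[of x y] ac_simps)
  also have "\<dots> \<le> p y * (tail_envelope a (y - x))\<^sup>2"
    using p_pos[of y] le_tail_envelope[OF assms, of "y - x"] tker_nonneg[of x y] tker_nonneg[of y x]
    by (intro mult_left_mono power_mono) auto
  finally show ?thesis .
qed

lemma nn_integral_tail_envelope:
  assumes "0 \<le> s"
  shows "(\<integral>\<^sup>+u. ennreal (tail_envelope a u * indicator {-s..s} u) \<partial>lborel)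
      = ennreal (LBINT u=-s..s. tail_envelope a u)"
    and "0 \<le> (LBINT u=-s..s. tail_envelope a u)"
proof -
  obtain B where "\<And>u. tail_envelope a u \<le> B" using tail_envelope_bounded[of a] by blast
  then show "(\<integral>\<^sup>+u. ennreal (tail_envelope a u * indicator {-s..s} u) \<partial>lborel)
      = ennreal (LBINT u=-s..s. tail_envelope a u)"
    using assms by (intro nn_integral_Icc_eq_interval_integral tail_envelope_nonneg) auto
  show "0 \<le> (LBINT u=-s..s. tail_envelope a u)"
    using assms by (intro interval_integral_Icc_nonneg tail_envelope_nonneg) simp
qed

lemma weighted_tker_square_le_truncated_tail_envelope:
  assumes q_supp: "\<And>x u. s < \<bar>u\<bar> \<Longrightarrow> q x (x + u) = 0"
  shows "indicator {x. a < \<bar>x\<bar>} x * p x * (t x y)\<^sup>2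
    \<le> p y * (tail_envelope a (y - x) * indicator {-s..s} (y - x))\<^sup>2"
proof (cases "a < \<bar>x\<bar> \<and> \<bar>y - x\<bar> \<le> s")
  case True
  then show ?thesis
    using weighted_tker_square_le_tail_envelope[of a x y] by (simp add: abs_le_iff)
next
  case False
  then have "indicator {x. a < \<bar>x\<bar>} x * p x = 0 \<or> t x y = 0"
    using tker_nonneg[of x y] tker_le[of x y] q_supp[of "y - x" x] by auto
  then show ?thesis using p_pos[of y] by auto
qed

lemma Tac_square_le:
  "ennreal ((Tac p q a f x)\<^sup>2 * p x)
    \<le> ennreal (indicator {x. a < \<bar>x\<bar>} x * p x) * (\<integral>\<^sup>+y. ennreal (\<bar>f y\<bar> * t x y) \<partial>lborel)\<^sup>2"
proof -
  have "ennreal \<bar>Top p q f x\<bar> \<le> (\<integral>\<^sup>+y. ennreal (\<bar>f y\<bar> * t x y) \<partial>lborel)"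
    using norm_integral_le_nn_integral_norm[of lborel "\<lambda>y. f y * t x y"] tker_nonneg
    by (simp add: Top_def abs_mult)
  then have "ennreal \<bar>Top p q f x\<bar> ^ 2 \<le> (\<integral>\<^sup>+y. ennreal (\<bar>f y\<bar> * t x y) \<partial>lborel)\<^sup>2"
    by (rule power_mono) simp
  moreover define w where "w = indicator {x. a < \<bar>x\<bar>} x * p x"
  then have "(Tac p q a f x)\<^sup>2 * p x = w * \<bar>Top p q f x\<bar>\<^sup>2"
    by (simp add: Tac_def indicator_def abs_le_iff not_le) arith
  moreover have "0 \<le> w"
    using p_pos[of x] by (simp add: w_def)
  ultimately show ?thesis
    unfolding w_def[symmetric] by (simp add: ennreal_mult ennreal_power mult_left_mono)
qed

lemma borel_measurable_Tac: "Tac p q a f \<in> borel_measurable borel"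
  using borel_measurable_integral_continuous_kernel[OF continuous_on_tker, of f]
  unfolding Tac_def[abs_def] Top_def by measurable

lemma L2norm_Tac_le:
  assumes "0 \<le> s" and q_supp: "\<And>x u. s < \<bar>u\<bar> \<Longrightarrow> q x (x + u) = 0" and "L2norm p f \<le> 1"
  shows "L2norm p (Tac p q a f) \<le> ereal (LBINT u=-s..s. tail_envelope a u)"
proof -
  define \<beta> where "\<beta> = (LBINT u=-s..s. tail_envelope a u)"
  have p_meas [measurable]: "p \<in> borel_measurable borel"
    using p_cont by (rule borel_measurable_continuous_onI)
  have [measurable]: "(\<lambda>y. \<bar>f y\<bar>) \<in> borel_measurable borel"
    using assms(3) p_pos by (intro borel_measurable_abs_of_L2norm_finite[OF _ _ p_meas]) auto
  have "L2norm p f \<le> ereal 1"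
    using assms(3) by (simp only: one_ereal_def[symmetric])
  then have f_sq: "(\<integral>\<^sup>+y. ennreal (\<bar>f y\<bar>\<^sup>2 * p y) \<partial>lborel) \<le> 1"
    using nn_integral_le_of_L2norm_le[of p f 1] p_pos by (simp add: less_imp_le)
  have "(\<integral>\<^sup>+x. ennreal ((Tac p q a f x)\<^sup>2 * p x) \<partial>lborel)
      \<le> (\<integral>\<^sup>+x. ennreal (indicator {x. a < \<bar>x\<bar>} x * p x)
            * (\<integral>\<^sup>+y. ennreal (\<bar>f y\<bar> * t x y) \<partial>lborel)\<^sup>2 \<partial>lborel)"
    by (intro nn_integral_mono Tac_square_le)
  also have "\<dots> \<le> (\<integral>\<^sup>+u. ennreal (tail_envelope a u * indicator {-s..s} u) \<partial>lborel)\<^sup>2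
      * (\<integral>\<^sup>+y. ennreal (\<bar>f y\<bar>\<^sup>2 * p y) \<partial>lborel)"
    using tker_nonneg tail_envelope_nonneg p_pos weighted_tker_square_le_truncated_tail_envelope[where s = s, OF q_supp]
    by (intro nn_integral_Schur_test_translation) (auto simp: less_imp_le)
  also have "\<dots> \<le> ennreal \<beta> ^ 2 * 1"
    unfolding nn_integral_tail_envelope(1)[OF \<open>0 \<le> s\<close>] \<beta>_def by (rule mult_left_mono[OF f_sq]) simp
  also have "\<dots> = ennreal (\<beta>\<^sup>2)"
    using nn_integral_tail_envelope(2)[OF \<open>0 \<le> s\<close>] by (simp add: \<beta>_def ennreal_power)
  finally show ?thesis
    unfolding \<beta>_def using p_pos nn_integral_tail_envelope(2)[OF \<open>0 \<le> s\<close>] borel_measurable_Tac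
    by (intro L2norm_le_of_nn_integral_le) (auto simp: less_imp_le)
qed

end

theorem proposition3p3:
  fixes p :: "real \<Rightarrow> real" and q :: "real \<Rightarrow> real \<Rightarrow> real" and s a :: real
  assumes p_pos: "\<And>x. p x > 0"
    and p_cont: "continuous_on UNIV p"
    and p_int: "integrable lborel p"
    and p_prob: "(LINT x|lborel. p x) = 1"
    and q_nonneg: "\<And>x y. q x y \<ge> 0"
    and q_bdd: "\<exists>B. \<forall>x y. q x y \<le> B"
    and q_cont: "continuous_on UNIV (\<lambda>(x, y). q x y)"
    and q_int: "\<And>x. integrable lborel (q x)"
    and q_prob: "\<And>x. (LINT y|lborel. q x y) = 1"
    and s_pos: "s > 0"
    and q_supp: "\<And>x u. \<bar>u\<bar> > s \<Longrightarrow> q x (x + u) = 0"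
    and a_pos: "a > 0"
  shows "opnorm2 p (Tac p q a) \<le>
    ereal (LBINT u=-s..s. (SUP x\<in>{x. \<bar>x\<bar> > a}.
              sqrt (tker p q x (x + u) * tker p q (x + u) x)))"
proof -
  interpret metropolis_kernel p q
    using p_pos p_cont q_nonneg q_bdd q_cont by unfold_locales
  have "L2norm p (Tac p q a f) \<le> ereal (LBINT u=-s..s. tail_envelope a u)" if "L2norm p f \<le> 1" for f
    using s_pos q_supp that by (intro L2norm_Tac_le) auto
  then show ?thesis
    unfolding opnorm2_def tail_envelope_def by (intro SUP_least) auto
qed

end
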